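(* Let $\hat y(x)=\frac1{2\pi}\arg(x)$ on $\Lambda$ and let $f(\xi):=\sum_{b\in\mathcal R_\xi}\psi'(D\hat y_b)$, $\xi\in\Lambda$, be the associated forces. Then $\hat\alpha\in[D\hat y]$ satisfies $\hat\alpha_b\in[-\tfrac13,\tfrac13]$ for all $b\in\mathcal B$, and there is a constant $C$ such that $|f(\xi)|\le C|\xi|^{-3}$ for all $\xi\in\Lambda$. In particular, $|f(\xi)|\le C_1(1+|\xi|)^{-t}$ for some $C_1$ and $t>2$.
   Context: $\mathsf R_6$ rotation by $\pi/3$, $a_1=(1,0)^T$, $a_i=\mathsf R_6^{i-1}a_1$, $\Lambda:=(\tfrac12,\tfrac{\sqrt3}{6})^T+\{ma_1+na_2:m,n\in\mathbb Z\}$. Bonds $\mathcal B=\{(\xi,\eta)\in\Lambda^2:|\xi-\eta|=1\}$ (ordered), $-b=(\eta,\xi)$, $\mathcal R_\xi=\{(\xi,\xi+a_i):i=1,\dots,6\}$, $Dy_b=y(\eta)-y(\xi)$. $[Dy]$ is the set of $\alpha:\mathcal B\to[-\frac12,\frac12]$ with $\alpha_{-b}=-\alpha_b$ and $Dy_b-\alpha_b\in\mathbb Z$. In $\hat y(x)=\frac1{2\pi}\arg(x)$, $x$ is identified with $x_1+ix_2$ and the branch cut is along the positive $x_1$-axis. The potential $\psi\in C(\mathbb R)\cap C^4(\mathbb R\setminus(\mathbb Z+\tfrac12))$ satisfies: ($\psi$1) 1-periodic; ($\psi$2) $\psi$ and $\psi(\tfrac12+\cdot)$ even; ($\psi$3)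 $\psi(r)=0$ iff $r\in\mathbb Z$; ($\psi$4) $\psi''(0)=\mu>0$; ($\psi$5) $\psi(x)\ge\frac12\psi''(0)x^2$ on $[-\frac12,\frac12]$. *)

theory Defs
  imports "HOL-Analysis.Analysis"
begin

text \<open>Points of the plane are identified with complex numbers x1 + i x2.\<close>

definition a_vec :: "nat \<Rightarrow> complex" where
  "a_vec i = cis (pi * real (i - 1) / 3)"

definition Lambda :: "complex set" where
  "Lambda = {Complex (1/2) (sqrt 3 / 6) + of_int m * a_vec 1 + of_int n * a_vec 2 | m n. True}"

definition Bonds :: "(complex \<times> complex) set" where
  "Bonds = {(\<xi>, \<eta>). \<xi> \<in> Lambda \<and> \<eta> \<in> Lambda \<and> cmod (\<xi> - \<eta>) = 1}"

definition neg_bond :: "complex \<times> complex \<Rightarrow> complex \<times> complex" where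
  "neg_bond b = (snd b, fst b)"

definition Rxi :: "complex \<Rightarrow> (complex \<times> complex) set" where
  "Rxi \<xi> = {(\<xi>, \<xi> + a_vec i) | i. i \<in> {1..6}}"

definition Dif :: "(complex \<Rightarrow> real) \<Rightarrow> complex \<times> complex \<Rightarrow> real" where
  "Dif y b = y (snd b) - y (fst b)"

definition DyClass :: "(complex \<Rightarrow> real) \<Rightarrow> ((complex \<times> complex) \<Rightarrow> real) set" where
  "DyClass y = {\<alpha>. \<forall>b\<in>Bonds. \<alpha> b \<in> {-1/2..1/2} \<and> \<alpha> (neg_bond b) = - \<alpha> b
                       \<and> Dif y b - \<alpha> b \<in> \<int>}"

text \<open>hat y(x) = arg(x)/(2 pi), branch cut along the positive x1-axis: arg in [0, 2 pi).\<close>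
definition yhat :: "complex \<Rightarrow> real" where
  "yhat x = Arg2pi x / (2 * pi)"

definition forces :: "(real \<Rightarrow> real) \<Rightarrow> complex \<Rightarrow> real" where
  "forces \<psi> \<xi> = (\<Sum>b\<in>Rxi \<xi>. deriv \<psi> (Dif yhat b))"

definition halfints :: "real set" where
  "halfints = {of_int k + 1/2 | k. True}"

definition C4_off :: "(real \<Rightarrow> real) \<Rightarrow> real set \<Rightarrow> bool" where
  "C4_off \<psi> S \<longleftrightarrow> (\<forall>k<4. \<forall>x\<in>S. (deriv ^^ k) \<psi> differentiable (at x))
                    \<and> continuous_on S ((deriv ^^ 4) \<psi>)"

end

theory Submission
  imports Defs
begin

text \<open>
  Every lattice point has distance at
  least \<open>sqrt 3 / 6\<close> from each line \<open>\<real> a\<^sub>i\<close>, hence a bond \<open>(\<xi>, \<xi> + a\<^sub>i)\<close> subtends an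
  angle of at most \<open>2\<pi>/3\<close> at the origin. Consequently \<open>D yhat\<^sub>b\<close> agrees modulo 1 with
  \<open>Arg (\<eta>/\<xi>) / 2\<pi>\<close>, which lies in \<open>[-1/3, 1/3]\<close> and is therefore the only element of
  \<open>[D yhat]\<close>.

  Since \<open>\<psi>'\<close> is odd and 1-periodic, \<open>f(\<xi>)\<close> is the sum of \<open>\<psi>'(\<theta>\<^sub>i)\<close> over the six bond
  angles \<open>\<theta>\<^sub>i = Arg ((\<xi> + a\<^sub>i)/\<xi>) / 2\<pi>\<close>, and \<open>\<psi>'(\<theta>) = \<mu>\<theta> + O(\<theta>\<^sup>3)\<close>. The angles are
  \<open>O(1/|\<xi>|)\<close>, while their sum is the argument of \<open>\<Prod>\<^sub>i (1 + a\<^sub>i/\<xi>) = 1 - \<xi>^-6\<close> and hence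
  \<open>O(|\<xi>|^-6)\<close>; both contributions are \<open>O(|\<xi>|^-3)\<close>.
\<close>

definition omega :: complex where
  "omega = Complex (1/2) (sqrt 3 / 2)"

lemma omega_squared: "omega\<^sup>2 = omega - 1"
  by (simp add: omega_def complex_eq_iff power2_eq_square)

lemma a_vec_eq_omega_power: "a_vec i = omega ^ (i - 1)"
proof -
  have "cis (pi / 3) = omega"
    by (simp add: omega_def complex_eq_iff cos_60 sin_60)
  then show ?thesis
    using Complex.DeMoivre[of "pi / 3" "i - 1"] by (simp add: a_vec_def mult.commute)
qed

lemma a_vec_values:
  "a_vec 1 = 1" "a_vec 2 = omega" "a_vec 3 = omega - 1"
  "a_vec 4 = -1" "a_vec 5 = - omega" "a_vec 6 = 1 - omega"
proof -
  have "omega ^ 3 = -1" "omega ^ 4 = - omega" "omega ^ 5 = 1 - omega"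
    using omega_squared unfolding power2_eq_square by (simp_all add: eval_nat_numeral; algebra)+
  then show "a_vec 1 = 1" "a_vec 2 = omega" "a_vec 3 = omega - 1"
    "a_vec 4 = -1" "a_vec 5 = - omega" "a_vec 6 = 1 - omega"
    by (simp_all add: a_vec_eq_omega_power omega_squared)
qed

(* The simplifier rewrites a_vec 1 to a_vec (Suc 0), so a_vec_values(1) alone is not enough. *)
lemma a_vec_Suc_0 [simp]: "a_vec (Suc 0) = 1"
  using a_vec_values(1) by simp

lemma norm_a_vec [simp]: "cmod (a_vec i) = 1"
  by (simp add: a_vec_def)

lemma a_vec_inj_on: "inj_on a_vec {1..6}"
proof (rule inj_onI)
  fix i j :: nat
  assume "i \<in> {1..6}" "j \<in> {1..6}" and eq: "a_vec i = a_vec j"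
  then have "i \<in> {1,2,3,4,5,6}" "j \<in> {1,2,3,4,5,6}"
    by auto
  with eq show "i = j"
    by (auto simp: a_vec_values omega_def complex_eq_iff)
qed

lemma Lambda_coordinates:
  assumes "\<xi> \<in> Lambda"
  obtains m n :: int where "\<xi> = Complex (1/2 + m + n/2) (sqrt 3 / 6 + n * sqrt 3 / 2)"
  using assms by (auto simp: Lambda_def a_vec_values omega_def complex_eq_iff)

(* Im (\<xi> * cnj a\<^sub>i) is the signed distance of \<xi> from the line \<real> a\<^sub>i; on the lattice it is
   sqrt 3 / 6 times an integer prime to 3. *)
lemma Lambda_Im_rotation_sq_ge:
  assumes "\<xi> \<in> Lambda" "i \<in> {1..6}"
  shows "(Im (\<xi> * cnj (a_vec i)))\<^sup>2 \<ge> 1/12"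
proof -
  obtain m n :: int where \<xi>: "\<xi> = Complex (1/2 + m + n/2) (sqrt 3 / 6 + n * sqrt 3 / 2)"
    using Lambda_coordinates[OF assms(1)] .
  have "i \<in> {1,2,3,4,5,6}"
    using assms(2) by auto
  then have "\<exists>k \<in> {1 + 3*n, -(1 + 3*m), -(2 + 3*m + 3*n), -(1 + 3*n), 1 + 3*m, 2 + 3*m + 3*n}.
      Im (\<xi> * cnj (a_vec i)) = of_int k * sqrt 3 / 6"
    by (auto simp: \<xi> a_vec_values omega_def field_simps)
  then obtain k :: int
    where "k \<in> {1 + 3*n, -(1 + 3*m), -(2 + 3*m + 3*n), -(1 + 3*n), 1 + 3*m, 2 + 3*m + 3*n}"
      and k: "Im (\<xi> * cnj (a_vec i)) = of_int k * sqrt 3 / 6"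
    by blast
  then have "\<not> 3 dvd k"
    by (elim insertE emptyE) presburger+
  then have "1 \<le> \<bar>k\<bar>"
    by (cases "k = 0") auto
  then have "1 \<le> (real_of_int k)\<^sup>2"
    using one_le_power[of "\<bar>real_of_int k\<bar>" 2] by simp
  then show ?thesis
    unfolding k by (simp add: power_mult_distrib power_divide)
qed

lemma eisenstein_units:
  fixes p q :: int
  assumes "p\<^sup>2 + p*q + q\<^sup>2 = 1"
  shows "(p, q) \<in> {(1,0), (0,1), (-1,1), (-1,0), (0,-1), (1,-1)}"
proof -
  have abs_le_1: "\<bar>r\<bar> \<le> 1" if "3 * r\<^sup>2 \<le> 4" for r :: int
  proof (rule ccontr)
    assume "\<not> \<bar>r\<bar> \<le> 1"
    then have "4 \<le> \<bar>r\<bar> * \<bar>r\<bar>"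
      using mult_mono[of 2 "\<bar>r\<bar>" 2 "\<bar>r\<bar>"] by simp
    then show False
      using that by (simp add: power2_eq_square)
  qed
  have "(2*p + q)\<^sup>2 + 3 * q\<^sup>2 = 4" "(2*q + p)\<^sup>2 + 3 * p\<^sup>2 = 4"
    using assms by (simp_all add: power2_eq_square algebra_simps)
  then have "\<bar>p\<bar> \<le> 1" "\<bar>q\<bar> \<le> 1"
    by (intro abs_le_1; smt (verit) zero_le_power2)+
  then have "p \<in> {-1,0,1}" "q \<in> {-1,0,1}"
    by auto
  then show ?thesis
    using assms by auto
qed

lemma Bonds_direction:
  assumes "b \<in> Bonds"
  obtains i where "i \<in> {1..6}" "snd b = fst b + a_vec i"
proof -
  obtain \<xi> \<eta> where b: "b = (\<xi>, \<eta>)" "\<xi> \<in> Lambda" "\<eta> \<in> Lambda" "cmod (\<eta> - \<xi>) = 1"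
    using assms unfolding Bonds_def by (auto simp: norm_minus_commute)
  obtain m n m' n' :: int
    where \<xi>: "\<xi> = Complex (1/2 + m + n/2) (sqrt 3 / 6 + n * sqrt 3 / 2)"
      and \<eta>: "\<eta> = Complex (1/2 + m' + n'/2) (sqrt 3 / 6 + n' * sqrt 3 / 2)"
    using Lambda_coordinates[OF b(2)] Lambda_coordinates[OF b(3)] by metis
  define p q where "p = m' - m" and "q = n' - n"
  have d: "\<eta> - \<xi> = Complex (p + q/2) (q * sqrt 3 / 2)"
    by (simp add: \<xi> \<eta> p_def q_def complex_eq_iff field_simps)
  have "(p + q/2)\<^sup>2 + (q * sqrt 3 / 2)\<^sup>2 = 1"
    using b(4) unfolding d cmod_def by simp
  then have "real_of_int (p\<^sup>2 + p*q + q\<^sup>2) = 1"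
    by (simp add: power2_eq_square field_simps)
  then have "(p, q) \<in> {(1,0), (0,1), (-1,1), (-1,0), (0,-1), (1,-1)}"
    by (intro eisenstein_units) linarith
  then have "\<eta> - \<xi> \<in> {a_vec 1, a_vec 2, a_vec 3, a_vec 4, a_vec 5, a_vec 6}"
    unfolding d a_vec_values by (auto simp: omega_def complex_eq_iff)
  moreover have "{1..6::nat} = {1,2,3,4,5,6}"
    by auto
  ultimately have "\<exists>i \<in> {1..6}. \<eta> - \<xi> = a_vec i"
    by auto
  then show ?thesis
    using that b(1) by (auto simp: algebra_simps)
qed

lemma cis_eq_imp_diff_Ints:
  assumes "cis a = cis b"
  shows "(a - b) / (2*pi) \<in> \<int>"
proof -
  obtain k :: int where "a = b + 2*pi*k"
    using assms sin_cos_eq_iff[of a b] by (auto simp: complex_eq_iff)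
  then show ?thesis
    by simp
qed

lemma cis_eq_imp_eq:
  assumes "cis a = cis b" "\<bar>a - b\<bar> < 2*pi"
  shows "a = b"
proof -
  have "\<bar>(a - b) / (2*pi)\<bar> < 1"
    using assms(2) by (simp add: abs_divide)
  then have "(a - b) / (2*pi) = 0"
    using Ints_nonzero_abs_less1 cis_eq_imp_diff_Ints[OF assms(1)] by blast
  then show ?thesis
    by simp
qed

lemma cis_sum: "cis (sum f A) = (\<Prod>i\<in>A. cis (f i))"
  by (induction A rule: infinite_finite_induct) (simp_all flip: cis_mult)

lemma sgn_prod: "sgn (\<Prod>i\<in>A. z i) = (\<Prod>i\<in>A. sgn (z i :: complex))"
  by (induction A rule: infinite_finite_induct) (simp_all add: sgn_mult)

lemma cis_Arg2pi: "z \<noteq> 0 \<Longrightarrow> cis (Arg2pi z) = sgn z"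
  using Arg2pi_eq[of z] by (simp add: sgn_eq cis_conv_exp field_simps)

lemma sum_Arg_eq_Arg_prod:
  assumes "finite A" "\<And>i. i \<in> A \<Longrightarrow> z i \<noteq> 0"
    and small: "\<bar>\<Sum>i\<in>A. Arg (z i)\<bar> + \<bar>Arg (\<Prod>i\<in>A. z i)\<bar> < 2*pi"
  shows "(\<Sum>i\<in>A. Arg (z i)) = Arg (\<Prod>i\<in>A. z i)"
proof (rule cis_eq_imp_eq)
  have "cis (\<Sum>i\<in>A. Arg (z i)) = (\<Prod>i\<in>A. sgn (z i))"
    using assms(2) by (simp add: cis_sum cis_Arg)
  also have "\<dots> = cis (Arg (\<Prod>i\<in>A. z i))"
    using assms(1,2) by (simp add: cis_Arg sgn_prod)
  finally show "cis (\<Sum>i\<in>A. Arg (z i)) = cis (Arg (\<Prod>i\<in>A. z i))" .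
  show "\<bar>(\<Sum>i\<in>A. Arg (z i)) - Arg (\<Prod>i\<in>A. z i)\<bar> < 2*pi"
    using small by linarith
qed

lemma abs_Arg_one_plus_le:
  assumes "cmod z \<le> 1/2"
  shows "\<bar>Arg (1 + z)\<bar> \<le> 2 * cmod z"
proof -
  have re: "Re (1 + z) \<ge> 1/2"
    using abs_Re_le_cmod[of z] assms by simp
  have "\<bar>Arg (1 + z)\<bar> = \<bar>arctan (Im z / Re (1 + z))\<bar>"
    using re by (simp add: arg_conv_arctan)
  also have "\<dots> \<le> \<bar>Im z / Re (1 + z)\<bar>"
    by (rule abs_arctan_le)
  also have "\<dots> = \<bar>Im z\<bar> / Re (1 + z)"
    using re by simp
  also have "\<dots> \<le> cmod z / (1/2)"
    using re abs_Im_le_cmod[of z] by (intro frac_le) auto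
  finally show ?thesis
    by simp
qed

lemma abs_Arg_le_two_pi_third:
  assumes "z \<noteq> 0" "- cmod z / 2 \<le> Re z"
  shows "\<bar>Arg z\<bar> \<le> 2*pi/3"
proof -
  have "cos (2*pi/3) \<le> cos \<bar>Arg z\<bar>"
    unfolding cos_120 cos_abs_real cos_Arg[OF assms(1)] using assms by (simp add: field_simps)
  moreover have "\<bar>Arg z\<bar> \<le> pi"
    using Arg_bounded[of z] by linarith
  ultimately show ?thesis
    by (subst (asm) cos_mono_le_eq) auto
qed

(* That is, cos (Arg ((z + 1) / z)) \<ge> -1/2. *)
lemma Re_mult_cnj_ge:
  fixes z :: complex
  assumes "1/12 \<le> (Im z)\<^sup>2"
  shows "- cmod ((z + 1) * cnj z) / 2 \<le> Re ((z + 1) * cnj z)"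
proof -
  define P s where "P = Re ((z + 1) * cnj z)" and "s = (Im z)\<^sup>2"
  have P: "P = (Re z)\<^sup>2 + Re z + s" and norm: "cmod ((z + 1) * cnj z) = sqrt (P\<^sup>2 + s)"
    by (simp_all add: P_def s_def cmod_def power2_eq_square algebra_simps)
  show ?thesis
  proof (cases "0 \<le> P")
    case False
    have "0 \<le> (Re z + 1/2)\<^sup>2"
      by simp
    then have "0 \<le> - P" "- P \<le> 1/4 - s"
      using False unfolding P by (simp_all add: power2_eq_square algebra_simps)
    then have "P\<^sup>2 \<le> (1/4 - s)\<^sup>2" "(s - 1/12) * (s - 3/4) \<le> 0"
      using assms power_mono[of "- P" "1/4 - s" 2] unfolding s_def
      by (auto intro!: mult_nonneg_nonpos)
    then have "3 * P\<^sup>2 \<le> s"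
      by (simp add: power2_eq_square algebra_simps)
    then have "- 2 * P \<le> sqrt (P\<^sup>2 + s)"
      by (intro real_le_rsqrt) (simp add: power2_eq_square)
    then show ?thesis
      unfolding norm P_def[symmetric] by simp
  qed (use norm_ge_zero[of "(z + 1) * cnj z"] P_def in linarith)
qed

(* The unit segment [z, z + 1] has distance |Im z| \<ge> sqrt 3 / 6 from the origin; the angle it
   subtends there is largest, namely 2\<pi>/3, for z = -1/2 + i sqrt 3 / 6. *)
lemma abs_Arg_succ_div_le:
  assumes "1/12 \<le> (Im z)\<^sup>2"
  shows "\<bar>Arg ((z + 1) / z)\<bar> \<le> 2*pi/3"
proof -
  have "z \<noteq> 0" "z + 1 \<noteq> 0"
    using assms by (auto simp: complex_eq_iff)
  have pos: "0 < (cmod z)\<^sup>2"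
    using \<open>z \<noteq> 0\<close> by simp
  have "(z + 1) / z = (z + 1) * cnj z / of_real ((cmod z)\<^sup>2)"
    unfolding complex_norm_square using \<open>z \<noteq> 0\<close> by (simp add: field_simps)
  then have "Arg ((z + 1) / z) = Arg ((z + 1) * cnj z)"
    using Arg_divide_of_real[OF pos] by simp
  moreover have "(z + 1) * cnj z \<noteq> 0"
    using \<open>z \<noteq> 0\<close> \<open>z + 1 \<noteq> 0\<close> by simp
  ultimately show ?thesis
    using abs_Arg_le_two_pi_third Re_mult_cnj_ge[OF assms] by simp
qed

lemma Lambda_neighbour_Arg:
  assumes "\<xi> \<in> Lambda" "i \<in> {1..6}"
  shows "\<xi> \<noteq> 0" "\<xi> + a_vec i \<noteq> 0" "\<bar>Arg ((\<xi> + a_vec i) / \<xi>)\<bar> \<le> 2*pi/3"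
proof -
  define z where "z = \<xi> * cnj (a_vec i)"
  have Im: "1/12 \<le> (Im z)\<^sup>2"
    using Lambda_Im_rotation_sq_ge[OF assms] by (simp add: z_def)
  have "a_vec i * cnj (a_vec i) = 1"
    using complex_norm_square[of "a_vec i"] by simp
  then have \<xi>: "\<xi> = z * a_vec i" and \<eta>: "\<xi> + a_vec i = (z + 1) * a_vec i"
    by (simp_all add: z_def algebra_simps flip: mult.assoc)
  have "a_vec i \<noteq> 0"
    by (metis norm_a_vec norm_zero zero_neq_one)
  moreover have "z \<noteq> 0" "z + 1 \<noteq> 0"
    using Im by (auto simp: complex_eq_iff)
  ultimately show "\<xi> \<noteq> 0" "\<xi> + a_vec i \<noteq> 0"
    by (simp_all only: \<eta>) (simp_all add: \<xi>)
  have "(\<xi> + a_vec i) / \<xi> = (z + 1) / z"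
    using \<open>a_vec i \<noteq> 0\<close> by (simp only: \<eta>) (simp add: \<xi>)
  then show "\<bar>Arg ((\<xi> + a_vec i) / \<xi>)\<bar> \<le> 2*pi/3"
    using abs_Arg_succ_div_le[OF Im] by simp
qed

lemma Bonds_Arg:
  assumes "b \<in> Bonds"
  shows "fst b \<noteq> 0" "snd b \<noteq> 0" "\<bar>Arg (snd b / fst b)\<bar> \<le> 2*pi/3"
proof -
  obtain i where "i \<in> {1..6}" "snd b = fst b + a_vec i"
    using Bonds_direction[OF assms] .
  moreover have "fst b \<in> Lambda"
    using assms by (auto simp: Bonds_def)
  ultimately show "fst b \<noteq> 0" "snd b \<noteq> 0" "\<bar>Arg (snd b / fst b)\<bar> \<le> 2*pi/3"
    using Lambda_neighbour_Arg by simp_all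
qed

lemma Dif_yhat_minus_Arg_Ints:
  assumes "\<xi> \<noteq> 0" "\<eta> \<noteq> 0"
  shows "Dif yhat (\<xi>, \<eta>) - Arg (\<eta> / \<xi>) / (2*pi) \<in> \<int>"
proof -
  have "cis (Arg2pi \<eta> - Arg2pi \<xi>) = sgn \<eta> / sgn \<xi>"
    using assms by (simp add: cis_Arg2pi flip: cis_divide)
  also have "\<dots> = cis (Arg (\<eta> / \<xi>))"
    using assms by (simp add: cis_Arg sgn_div_norm norm_divide field_simps)
  finally have "(Arg2pi \<eta> - Arg2pi \<xi> - Arg (\<eta> / \<xi>)) / (2*pi) \<in> \<int>"
    by (rule cis_eq_imp_diff_Ints)
  then show ?thesis
    by (simp add: Dif_def yhat_def diff_divide_distrib)
qed

(* The representative of D yhat_b modulo 1 given by the principal argument. *)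
definition bond_angle :: "complex \<times> complex \<Rightarrow> real" where
  "bond_angle b = Arg (snd b / fst b) / (2*pi)"

lemma abs_bond_angle_le:
  assumes "b \<in> Bonds"
  shows "\<bar>bond_angle b\<bar> \<le> 1/3"
  using Bonds_Arg(3)[OF assms] by (simp add: bond_angle_def abs_divide field_simps)

lemma bond_angle_neg_bond:
  assumes "b \<in> Bonds"
  shows "bond_angle (neg_bond b) = - bond_angle b"
proof -
  have inv: "fst b / snd b = inverse (snd b / fst b)"
    by simp
  have "Arg (snd b / fst b) = 0" if "snd b / fst b \<in> \<real>"
    using that Bonds_Arg(3)[OF assms] pi_gt_zero by (auto simp: Arg_real split: if_splits)
  then have "Arg (fst b / snd b) = - Arg (snd b / fst b)"
    unfolding inv Arg_inverse by auto
  then show ?thesis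
    by (simp add: bond_angle_def neg_bond_def)
qed

lemma Dif_yhat_minus_bond_angle_Ints:
  assumes "b \<in> Bonds"
  shows "Dif yhat b - bond_angle b \<in> \<int>"
  using Dif_yhat_minus_Arg_Ints[OF Bonds_Arg(1,2)[OF assms]] by (simp add: bond_angle_def)

lemma bond_angle_in_DyClass: "bond_angle \<in> DyClass yhat"
proof -
  have "neg_bond b \<in> Bonds" if "b \<in> Bonds" for b
    using that by (auto simp: Bonds_def neg_bond_def norm_minus_commute)
  then show ?thesis
    using abs_bond_angle_le bond_angle_neg_bond Dif_yhat_minus_bond_angle_Ints
    by (fastforce simp: DyClass_def abs_le_iff)
qed

lemma DyClass_yhat_eq_bond_angle:
  assumes "\<alpha> \<in> DyClass yhat" "b \<in> Bonds"
  shows "\<alpha> b = bond_angle b"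
proof -
  have "\<alpha> b \<in> {-1/2..1/2}" and \<alpha>: "Dif yhat b - \<alpha> b \<in> \<int>"
    using assms by (auto simp: DyClass_def)
  have "\<alpha> b - bond_angle b = (Dif yhat b - bond_angle b) - (Dif yhat b - \<alpha> b)"
    by simp
  also have "\<dots> \<in> \<int>"
    using Dif_yhat_minus_bond_angle_Ints[OF assms(2)] \<alpha> by (rule Ints_diff)
  finally have "\<alpha> b - bond_angle b \<in> \<int>" .
  moreover have "\<bar>\<alpha> b - bond_angle b\<bar> < 1"
    using \<open>\<alpha> b \<in> {-1/2..1/2}\<close> abs_bond_angle_le[OF assms(2)] by auto
  ultimately show ?thesis
    using Ints_nonzero_abs_less1 by fastforce
qed

lemma deriv_shift_periodic:
  fixes \<psi> :: "real \<Rightarrow> real"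
  assumes "\<And>x. \<psi> (x + 1) = \<psi> x"
  shows "deriv \<psi> (x + of_int k) = deriv \<psi> x"
proof -
  interpret periodic_fun_simple' \<psi>
    by standard (rule assms)
  have "(\<lambda>t. \<psi> (t + of_int k)) = \<psi>"
    using plus_of_int by auto
  then show ?thesis
    unfolding deriv_def DERIV_shift by simp
qed

lemma deriv_uminus_of_even:
  fixes \<psi> :: "real \<Rightarrow> real"
  assumes "\<And>x. \<psi> (- x) = \<psi> x" "\<psi> differentiable at x"
  shows "deriv \<psi> (- x) = - deriv \<psi> x"
proof -
  have "DERIV (\<lambda>t. \<psi> (- t)) x :> deriv \<psi> x"
    using assms DERIV_deriv_iff_real_differentiable by simp
  then have "DERIV \<psi> (- x) :> - deriv \<psi> x"
    using DERIV_mirror[of \<psi> "- deriv \<psi> x" x] by simp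
  then show ?thesis
    by (rule DERIV_imp_deriv)
qed

lemma Maclaurin_odd_cubic:
  fixes g :: "real \<Rightarrow> real"
  assumes "d 0 = g" and D: "\<And>m t. m < 3 \<Longrightarrow> \<bar>t\<bar> \<le> \<bar>x\<bar> \<Longrightarrow> DERIV (d m) t :> d (Suc m) t"
    and odd: "g (- x) = - g x"
  obtains t t' where "\<bar>t\<bar> \<le> \<bar>x\<bar>" "\<bar>t'\<bar> \<le> \<bar>x\<bar>" "g x - d 1 0 * x = (d 3 t + d 3 t') / 12 * x ^ 3"
proof -
  have expansion: "\<exists>t. \<bar>t\<bar> \<le> \<bar>x\<bar> \<and> g y = d 0 0 + d 1 0 * y + d 2 0 / 2 * y\<^sup>2 + d 3 t / 6 * y ^ 3"
    if "\<bar>y\<bar> = \<bar>x\<bar>" for y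
    using Maclaurin_bi_le[of d g 3 y] assms(1) D that by (simp add: eval_nat_numeral power2_eq_square)
  obtain t t' where "\<bar>t\<bar> \<le> \<bar>x\<bar>" "\<bar>t'\<bar> \<le> \<bar>x\<bar>"
    and "g x = d 0 0 + d 1 0 * x + d 2 0 / 2 * x\<^sup>2 + d 3 t / 6 * x ^ 3"
    and "g (- x) = d 0 0 - d 1 0 * x + d 2 0 / 2 * x\<^sup>2 - d 3 t' / 6 * x ^ 3"
    using expansion[of x] expansion[of "- x"] by auto
  with odd show ?thesis
    using that by (simp add: field_simps)
qed

lemma deriv_even_cubic_remainder:
  fixes \<psi> :: "real \<Rightarrow> real"
  assumes C4: "C4_off \<psi> S" and sub: "{-r..r} \<subseteq> S" and even: "\<And>x. \<psi> (- x) = \<psi> x"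
  obtains K where "0 \<le> K" "\<And>x. \<bar>x\<bar> \<le> r \<Longrightarrow> \<bar>deriv \<psi> x - deriv (deriv \<psi>) 0 * x\<bar> \<le> K * \<bar>x\<bar> ^ 3"
proof -
  define d where "d m = (deriv ^^ Suc m) \<psi>" for m
  have diff: "(deriv ^^ k) \<psi> differentiable (at t)" if "k < 4" "\<bar>t\<bar> \<le> r" for k t
  proof -
    have "t \<in> S"
      using sub that(2) by (auto simp: abs_le_iff)
    then show ?thesis
      using C4 that(1) unfolding C4_off_def by blast
  qed
  have D: "DERIV (d m) t :> d (Suc m) t" if "m < 3" "\<bar>t\<bar> \<le> r" for m t
    using diff[of "Suc m" t] that
    unfolding d_def funpow.simps(2)[of "Suc m"] comp_apply
    by (simp only: DERIV_deriv_iff_real_differentiable)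
  have "continuous_on {-r..r} (d 3)"
    using C4 sub continuous_on_subset unfolding C4_off_def d_def by (auto simp: eval_nat_numeral)
  then have "bounded (d 3 ` {-r..r})"
    by (intro compact_imp_bounded compact_continuous_image compact_Icc)
  then obtain B where "0 < B" and B: "\<And>t. t \<in> {-r..r} \<Longrightarrow> \<bar>d 3 t\<bar> \<le> B"
    unfolding bounded_pos by (metis real_norm_def image_eqI)
  have "\<bar>deriv \<psi> x - deriv (deriv \<psi>) 0 * x\<bar> \<le> B / 6 * \<bar>x\<bar> ^ 3" if x: "\<bar>x\<bar> \<le> r" for x
  proof -
    have "d 0 = deriv \<psi>" "d 1 0 = deriv (deriv \<psi>) 0"
      by (simp_all add: d_def)
    moreover have "deriv \<psi> (- x) = - deriv \<psi> x"
      using deriv_uminus_of_even even diff[of 0 x] x by simp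
    ultimately obtain t t' where "t \<in> {-r..r}" "t' \<in> {-r..r}"
      and remainder: "deriv \<psi> x - deriv (deriv \<psi>) 0 * x = (d 3 t + d 3 t') / 12 * x ^ 3"
      using Maclaurin_odd_cubic[of d "deriv \<psi>" x] D x by (smt (verit) atLeastAtMost_iff abs_le_iff)
    have "\<bar>d 3 t + d 3 t'\<bar> \<le> 2 * B"
      using B[OF \<open>t \<in> _\<close>] B[OF \<open>t' \<in> _\<close>] abs_triangle_ineq[of "d 3 t" "d 3 t'"] by linarith
    then have "\<bar>d 3 t + d 3 t'\<bar> / 12 * \<bar>x\<bar> ^ 3 \<le> B / 6 * \<bar>x\<bar> ^ 3"
      by (intro mult_right_mono) auto
    then show ?thesis
      unfolding remainder by (simp add: abs_mult power_abs)
  qed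
  then show ?thesis
    using that \<open>0 < B\<close> by (metis divide_nonneg_pos less_eq_real_def zero_less_numeral)
qed

lemma forces_eq_sum_bond_angle:
  fixes \<psi> :: "real \<Rightarrow> real"
  assumes "\<And>x. \<psi> (x + 1) = \<psi> x" "\<xi> \<in> Lambda"
  shows "forces \<psi> \<xi> = (\<Sum>i\<in>{1..6}. deriv \<psi> (bond_angle (\<xi>, \<xi> + a_vec i)))"
proof -
  have "Rxi \<xi> = (\<lambda>i. (\<xi>, \<xi> + a_vec i)) ` {1..6}"
    unfolding Rxi_def by auto
  moreover have "inj_on (\<lambda>i. (\<xi>, \<xi> + a_vec i)) {1..6}"
    using a_vec_inj_on by (auto simp: inj_on_def)
  ultimately have "forces \<psi> \<xi> = (\<Sum>i\<in>{1..6}. deriv \<psi> (Dif yhat (\<xi>, \<xi> + a_vec i)))"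
    by (simp add: forces_def sum.reindex)
  also have "\<dots> = (\<Sum>i\<in>{1..6}. deriv \<psi> (bond_angle (\<xi>, \<xi> + a_vec i)))"
  proof (rule sum.cong)
    fix i :: nat
    assume "i \<in> {1..6}"
    then have "Dif yhat (\<xi>, \<xi> + a_vec i) - bond_angle (\<xi>, \<xi> + a_vec i) \<in> \<int>"
      using Dif_yhat_minus_Arg_Ints Lambda_neighbour_Arg(1,2)[OF assms(2)] by (simp add: bond_angle_def)
    then obtain k where "Dif yhat (\<xi>, \<xi> + a_vec i) - bond_angle (\<xi>, \<xi> + a_vec i) = of_int k"
      by (rule Ints_cases)
    then have "Dif yhat (\<xi>, \<xi> + a_vec i) = bond_angle (\<xi>, \<xi> + a_vec i) + of_int k"
      by (simp add: algebra_simps)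
    then show "deriv \<psi> (Dif yhat (\<xi>, \<xi> + a_vec i)) = deriv \<psi> (bond_angle (\<xi>, \<xi> + a_vec i))"
      using deriv_shift_periodic[of \<psi>, OF assms(1)] by simp
  qed simp
  finally show ?thesis .
qed

lemma abs_Arg_neighbour_le:
  assumes "2 \<le> cmod \<xi>"
  shows "\<bar>Arg ((\<xi> + a_vec i) / \<xi>)\<bar> \<le> 2 / cmod \<xi>"
proof -
  have "\<xi> \<noteq> 0" "cmod (a_vec i / \<xi>) = 1 / cmod \<xi>"
    using assms by (auto simp: norm_divide)
  moreover have "1 / cmod \<xi> \<le> 1/2"
    using assms by (simp add: divide_le_eq)
  ultimately show ?thesis
    using abs_Arg_one_plus_le[of "a_vec i / \<xi>"] by (simp add: add_divide_distrib)
qed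

lemma prod_one_plus_a_vec: "(\<Prod>i\<in>{1..6}. 1 + a_vec i * w) = 1 - w ^ 6"
proof -
  have "(\<Prod>i\<in>{1..6}. 1 + a_vec i * w) =
      (1 + a_vec 1 * w) * (1 + a_vec 2 * w) * (1 + a_vec 3 * w) *
      (1 + a_vec 4 * w) * (1 + a_vec 5 * w) * (1 + a_vec 6 * w)"
    by (simp add: numeral_eq_Suc mult.assoc)
  then show ?thesis
    unfolding a_vec_values using omega_squared by algebra
qed

lemma abs_sum_Arg_neighbours_le:
  assumes "4 \<le> cmod \<xi>"
  shows "\<bar>\<Sum>i\<in>{1..6}. Arg ((\<xi> + a_vec i) / \<xi>)\<bar> \<le> 2 / cmod \<xi> ^ 6"
proof -
  define w where "w = 1 / \<xi>"
  have w: "cmod w = 1 / cmod \<xi>" "cmod w \<le> 1/4"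
    using assms by (auto simp: w_def norm_divide divide_le_eq)
  have "\<xi> \<noteq> 0"
    using assms by auto
  then have ratio: "(\<xi> + a_vec i) / \<xi> = 1 + a_vec i * w" for i
    by (simp add: w_def field_simps)
  have nonzero: "1 + a_vec i * w \<noteq> 0" for i
  proof
    assume "1 + a_vec i * w = 0"
    then have "a_vec i * w = - 1"
      by (rule add_eq_0_iff[THEN iffD1])
    then have "cmod (a_vec i * w) = 1"
      by simp
    then show False
      using w(2) by (simp add: norm_mult)
  qed
  have "\<bar>\<Sum>i\<in>{1..6}. Arg (1 + a_vec i * w)\<bar> \<le> (\<Sum>i\<in>{1..6::nat}. 2 * cmod w)"
    using w(2) abs_Arg_one_plus_le[of "a_vec _ * w"]
    by (intro order.trans[OF sum_abs] sum_mono) (simp add: norm_mult)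
  also have "\<dots> \<le> 3"
    using w(2) by simp
  finally have sum_le: "\<bar>\<Sum>i\<in>{1..6}. Arg (1 + a_vec i * w)\<bar> \<le> 3" .
  have "cmod (w ^ 6) = cmod w ^ 6"
    by (simp add: norm_power)
  also have "\<dots> \<le> (1/4) ^ 6"
    using w(2) by (intro power_mono) auto
  also have "(1/4 :: real) ^ 6 \<le> 1/2"
    by (simp add: power_divide)
  finally have w6: "cmod (w ^ 6) \<le> 1/2" .
  then have Arg6: "\<bar>Arg (1 - w ^ 6)\<bar> \<le> 2 * cmod (w ^ 6)"
    using abs_Arg_one_plus_le[of "- (w ^ 6)"] by simp
  have "\<bar>\<Sum>i\<in>{1..6}. Arg (1 + a_vec i * w)\<bar> + \<bar>Arg (1 - w ^ 6)\<bar> < 2*pi"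
    using sum_le Arg6 w6 pi_gt3 by linarith
  then have "(\<Sum>i\<in>{1..6}. Arg (1 + a_vec i * w)) = Arg (1 - w ^ 6)"
    using sum_Arg_eq_Arg_prod[of "{1..6}" "\<lambda>i. 1 + a_vec i * w", unfolded prod_one_plus_a_vec]
      nonzero by blast
  moreover have "cmod (w ^ 6) = 1 / cmod \<xi> ^ 6"
    by (simp add: w_def norm_power norm_divide power_one_over)
  ultimately show ?thesis
    unfolding ratio using Arg6 by simp
qed

lemma abs_bond_angle_neighbour_far:
  assumes "2 \<le> cmod \<xi>"
  shows "\<bar>bond_angle (\<xi>, \<xi> + a_vec i)\<bar> \<le> 1 / cmod \<xi>"
proof -
  have "\<bar>Arg ((\<xi> + a_vec i) / \<xi>)\<bar> \<le> 2 / cmod \<xi>"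
    using abs_Arg_neighbour_le[OF assms] .
  also have "\<dots> \<le> 2*pi / cmod \<xi>"
    using assms pi_gt3 by (intro divide_right_mono) auto
  finally show ?thesis
    by (simp add: bond_angle_def abs_divide field_simps)
qed

lemma abs_sum_bond_angle_neighbours_far:
  assumes "4 \<le> cmod \<xi>"
  shows "\<bar>\<Sum>i\<in>{1..6}. bond_angle (\<xi>, \<xi> + a_vec i)\<bar> \<le> 1 / cmod \<xi> ^ 3"
proof -
  have "\<bar>\<Sum>i\<in>{1..6}. Arg ((\<xi> + a_vec i) / \<xi>)\<bar> \<le> 2 / cmod \<xi> ^ 6"
    using abs_sum_Arg_neighbours_le[OF assms] .
  also have "\<dots> \<le> 2 / cmod \<xi> ^ 3"
    using assms by (intro divide_left_mono power_increasing) auto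
  also have "\<dots> \<le> 2*pi / cmod \<xi> ^ 3"
    using assms pi_gt3 by (intro divide_right_mono) auto
  finally have "\<bar>\<Sum>i\<in>{1..6}. Arg ((\<xi> + a_vec i) / \<xi>)\<bar> \<le> 2*pi / cmod \<xi> ^ 3" .
  then show ?thesis
    by (simp add: bond_angle_def abs_divide field_simps flip: sum_divide_distrib)
qed

lemma abs_sum_le_linear_plus_cubic:
  fixes x y :: "'a \<Rightarrow> real"
  assumes "\<And>i. i \<in> A \<Longrightarrow> \<bar>y i - \<mu> * x i\<bar> \<le> K * \<bar>x i\<bar> ^ 3"
  shows "\<bar>\<Sum>i\<in>A. y i\<bar> \<le> \<bar>\<mu>\<bar> * \<bar>\<Sum>i\<in>A. x i\<bar> + K * (\<Sum>i\<in>A. \<bar>x i\<bar> ^ 3)"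
proof -
  have "(\<Sum>i\<in>A. y i) = \<mu> * (\<Sum>i\<in>A. x i) + (\<Sum>i\<in>A. y i - \<mu> * x i)"
    by (simp add: sum_distrib_left sum_subtractf)
  also have "\<bar>\<dots>\<bar> \<le> \<bar>\<mu>\<bar> * \<bar>\<Sum>i\<in>A. x i\<bar> + \<bar>\<Sum>i\<in>A. y i - \<mu> * x i\<bar>"
    by (metis abs_mult abs_triangle_ineq)
  also have "\<dots> \<le> \<bar>\<mu>\<bar> * \<bar>\<Sum>i\<in>A. x i\<bar> + (\<Sum>i\<in>A. \<bar>y i - \<mu> * x i\<bar>)"
    using sum_abs by (rule add_left_mono)
  also have "\<dots> \<le> \<bar>\<mu>\<bar> * \<bar>\<Sum>i\<in>A. x i\<bar> + K * (\<Sum>i\<in>A. \<bar>x i\<bar> ^ 3)"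
    using assms by (simp add: sum_distrib_left sum_mono)
  finally show ?thesis .
qed

lemma Icc_third_subset_not_halfints: "{- (1/3)..1/3} \<subseteq> - halfints"
proof
  fix t :: real
  assume t: "t \<in> {- (1/3)..1/3}"
  show "t \<in> - halfints"
  proof
    assume "t \<in> halfints"
    then have "t - 1/2 \<in> \<int>"
      by (auto simp: halfints_def)
    moreover have "\<bar>t - 1/2\<bar> < 1" "t - 1/2 \<noteq> 0"
      using t by auto
    ultimately show False
      using Ints_nonzero_abs_less1 by blast
  qed
qed

lemma forces_decay:
  fixes \<psi> :: "real \<Rightarrow> real"
  assumes C4: "C4_off \<psi> (- halfints)"
    and periodic: "\<And>x. \<psi> (x + 1) = \<psi> x" and even: "\<And>x. \<psi> (- x) = \<psi> x"
  obtains C where "0 \<le> C" "\<And>\<xi>. \<xi> \<in> Lambda \<Longrightarrow> \<bar>forces \<psi> \<xi>\<bar> \<le> C / cmod \<xi> ^ 3"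
proof -
  define \<mu> where "\<mu> = deriv (deriv \<psi>) 0"
  obtain K where "0 \<le> K" and K: "\<And>x. \<bar>x\<bar> \<le> 1/3 \<Longrightarrow> \<bar>deriv \<psi> x - \<mu> * x\<bar> \<le> K * \<bar>x\<bar> ^ 3"
    using deriv_even_cubic_remainder[OF C4 Icc_third_subset_not_halfints even] unfolding \<mu>_def by blast
  define D where "D = 2 * \<bar>\<mu>\<bar> + 6 * K"
  have "0 \<le> D"
    using \<open>0 \<le> K\<close> by (simp add: D_def)
  have "\<bar>forces \<psi> \<xi>\<bar> \<le> 64 * D / cmod \<xi> ^ 3" if \<xi>: "\<xi> \<in> Lambda" for \<xi>
  proof -
    define \<theta> where "\<theta> i = bond_angle (\<xi>, \<xi> + a_vec i)" for i
    define r where "r = cmod \<xi>"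
    have "0 < r"
      using Lambda_neighbour_Arg(1)[OF \<xi>, of 1] by (simp add: r_def)
    have \<theta>: "\<bar>\<theta> i\<bar> \<le> 1/3" if "i \<in> {1..6}" for i
      using Lambda_neighbour_Arg(3)[OF \<xi> that] by (simp add: \<theta>_def bond_angle_def abs_divide field_simps)
    have f: "\<bar>forces \<psi> \<xi>\<bar> \<le> \<bar>\<mu>\<bar> * \<bar>\<Sum>i\<in>{1..6}. \<theta> i\<bar> + K * (\<Sum>i\<in>{1..6}. \<bar>\<theta> i\<bar> ^ 3)"
      unfolding forces_eq_sum_bond_angle[where \<psi>=\<psi>, OF periodic \<xi>] \<theta>_def[symmetric]
      using K \<theta> by (intro abs_sum_le_linear_plus_cubic) simp
    show ?thesis
    proof (cases "r < 4")
      case True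
      have "\<bar>\<Sum>i\<in>{1..6}. \<theta> i\<bar> \<le> (\<Sum>i\<in>{1..6::nat}. 1/3)"
        using \<theta> by (intro order.trans[OF sum_abs] sum_mono)
      then have "\<bar>\<mu>\<bar> * \<bar>\<Sum>i\<in>{1..6}. \<theta> i\<bar> \<le> \<bar>\<mu>\<bar> * 2"
        by (intro mult_left_mono) auto
      moreover have "\<bar>\<theta> i\<bar> \<le> 1" if "i \<in> {1..6}" for i
        using \<theta>[OF that] by linarith
      then have "(\<Sum>i\<in>{1..6}. \<bar>\<theta> i\<bar> ^ 3) \<le> (\<Sum>i\<in>{1..6::nat}. 1)"
        by (intro sum_mono power_le_one) auto
      then have "K * (\<Sum>i\<in>{1..6}. \<bar>\<theta> i\<bar> ^ 3) \<le> K * 6"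
        using \<open>0 \<le> K\<close> by (intro mult_left_mono) auto
      ultimately have "\<bar>forces \<psi> \<xi>\<bar> \<le> D"
        using f unfolding D_def by linarith
      also have "D * r ^ 3 \<le> D * 4 ^ 3"
        using True \<open>0 < r\<close> \<open>0 \<le> D\<close> by (intro mult_left_mono power_mono) auto
      then have "D \<le> 64 * D / r ^ 3"
        using \<open>0 < r\<close> by (simp add: field_simps)
      finally show ?thesis
        by (simp add: r_def)
    next
      case False
      have "\<bar>\<Sum>i\<in>{1..6}. \<theta> i\<bar> \<le> 1 / r ^ 3"
        using False abs_sum_bond_angle_neighbours_far[of \<xi>] by (simp add: \<theta>_def r_def)
      then have "\<bar>\<mu>\<bar> * \<bar>\<Sum>i\<in>{1..6}. \<theta> i\<bar> \<le> \<bar>\<mu>\<bar> * (1 / r ^ 3)"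
        by (intro mult_left_mono) auto
      moreover have "(\<Sum>i\<in>{1..6}. \<bar>\<theta> i\<bar> ^ 3) \<le> (\<Sum>i\<in>{1..6::nat}. (1 / r) ^ 3)"
        using False abs_bond_angle_neighbour_far[of \<xi>]
        by (intro sum_mono power_mono) (auto simp: \<theta>_def r_def)
      then have "K * (\<Sum>i\<in>{1..6}. \<bar>\<theta> i\<bar> ^ 3) \<le> K * (6 * (1 / r) ^ 3)"
        using \<open>0 \<le> K\<close> by (intro mult_left_mono) auto
      ultimately have "\<bar>forces \<psi> \<xi>\<bar> \<le> \<bar>\<mu>\<bar> * (1 / r ^ 3) + K * (6 * (1 / r) ^ 3)"
        using f by linarith
      also have "\<dots> = (\<bar>\<mu>\<bar> + 6 * K) / r ^ 3"
        by (simp add: power_one_over add_divide_distrib)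
      also have "\<dots> \<le> 64 * D / r ^ 3"
        using \<open>0 < r\<close> \<open>0 \<le> K\<close> by (intro divide_right_mono) (auto simp: D_def)
      finally show ?thesis
        by (simp add: r_def)
    qed
  qed
  moreover have "0 \<le> 64 * D"
    using \<open>0 \<le> D\<close> by simp
  ultimately show ?thesis
    using that by blast
qed

lemma Lambda_norm_ge: "\<xi> \<in> Lambda \<Longrightarrow> 1/4 \<le> cmod \<xi>"
proof -
  assume "\<xi> \<in> Lambda"
  then have "1/12 \<le> (Im \<xi>)\<^sup>2"
    using Lambda_Im_rotation_sq_ge[of \<xi> 1] by simp
  moreover have "(Im \<xi>)\<^sup>2 \<le> (cmod \<xi>)\<^sup>2"
    using power_mono[OF abs_Im_le_cmod[of \<xi>], of 2] by simp
  ultimately have "(1/4)\<^sup>2 \<le> (cmod \<xi>)\<^sup>2"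
    by (simp add: power_divide)
  then show ?thesis
    using power2_le_imp_le[of "1/4" "cmod \<xi>"] by simp
qed

lemma inverse_cube_le_one_plus:
  fixes r :: real
  assumes "1/4 \<le> r"
  shows "1 / r ^ 3 \<le> 125 / (1 + r) ^ 3"
proof -
  have "(1 + r) ^ 3 \<le> (5 * r) ^ 3"
    using assms by (intro power_mono) auto
  then show ?thesis
    using assms by (simp add: field_simps power_mult_distrib)
qed

lemma Lambda_powr_decay:
  assumes "0 \<le> C" "\<xi> \<in> Lambda" "\<bar>y\<bar> \<le> C / cmod \<xi> ^ 3"
  shows "\<bar>y\<bar> \<le> C * cmod \<xi> powr (-3)" "\<bar>y\<bar> \<le> (C * 125) * (1 + cmod \<xi>) powr (-3)"
proof -
  have "1/4 \<le> cmod \<xi>"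
    using assms(2) by (rule Lambda_norm_ge)
  then have "0 < cmod \<xi>"
    by linarith
  then show "\<bar>y\<bar> \<le> C * cmod \<xi> powr (-3)"
    using assms(3) by (simp add: powr_neg_numeral)
  have "C * (1 / cmod \<xi> ^ 3) \<le> C * (125 / (1 + cmod \<xi>) ^ 3)"
    using \<open>1/4 \<le> cmod \<xi>\<close> by (intro mult_left_mono inverse_cube_le_one_plus assms(1))
  then show "\<bar>y\<bar> \<le> (C * 125) * (1 + cmod \<xi>) powr (-3)"
    using assms(3) by (simp add: powr_neg_numeral add_pos_nonneg)
qed

lemma DyClass_yhat_range:
  assumes "\<alpha> \<in> DyClass yhat" "b \<in> Bonds"
  shows "\<alpha> b \<in> {-1/3..1/3}"
proof -
  have "\<alpha> b = bond_angle b"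
    using assms by (rule DyClass_yhat_eq_bond_angle)
  moreover have "\<bar>bond_angle b\<bar> \<le> 1/3"
    using assms(2) by (rule abs_bond_angle_le)
  ultimately show ?thesis
    by (simp only: atLeastAtMost_iff) linarith
qed

theorem lemma4p4:
  fixes \<psi> :: "real \<Rightarrow> real" and \<mu> :: real
  assumes cont: "continuous_on UNIV \<psi>"
    and C4: "C4_off \<psi> (- halfints)"
    and psi1: "\<And>x. \<psi> (x + 1) = \<psi> x"
    and psi2a: "\<And>x. \<psi> (- x) = \<psi> x"
    and psi2b: "\<And>x. \<psi> (1/2 + (- x)) = \<psi> (1/2 + x)"
    and psi3: "\<And>r. \<psi> r = 0 \<longleftrightarrow> r \<in> \<int>"
    and psi4: "deriv (deriv \<psi>) 0 = \<mu>" "\<mu> > 0"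
    and psi5: "\<And>x. x \<in> {-1/2..1/2} \<Longrightarrow> \<psi> x \<ge> 1/2 * deriv (deriv \<psi>) 0 * x\<^sup>2"
  shows "DyClass yhat \<noteq> {}
       \<and> (\<forall>\<alpha>\<in>DyClass yhat. \<forall>b\<in>Bonds. \<alpha> b \<in> {-1/3..1/3})
       \<and> (\<exists>C. \<forall>\<xi>\<in>Lambda. \<bar>forces \<psi> \<xi>\<bar> \<le> C * cmod \<xi> powr (-3))
       \<and> (\<exists>C1 t. t > 2 \<and> (\<forall>\<xi>\<in>Lambda. \<bar>forces \<psi> \<xi>\<bar> \<le> C1 * (1 + cmod \<xi>) powr (-t)))"
proof -
  obtain C where "0 \<le> C" and C: "\<And>\<xi>. \<xi> \<in> Lambda \<Longrightarrow> \<bar>forces \<psi> \<xi>\<bar> \<le> C / cmod \<xi> ^ 3"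
    using forces_decay[where \<psi> = \<psi>, OF C4 psi1 psi2a] by blast
  show ?thesis
  proof (intro conjI)
    show "DyClass yhat \<noteq> {}"
      using bond_angle_in_DyClass by blast
    show "\<forall>\<alpha>\<in>DyClass yhat. \<forall>b\<in>Bonds. \<alpha> b \<in> {-1/3..1/3}"
      using DyClass_yhat_range by blast
    show "\<exists>C. \<forall>\<xi>\<in>Lambda. \<bar>forces \<psi> \<xi>\<bar> \<le> C * cmod \<xi> powr (-3)"
      using Lambda_powr_decay(1)[OF \<open>0 \<le> C\<close> _ C] by blast
    show "\<exists>C1 t. t > 2 \<and> (\<forall>\<xi>\<in>Lambda. \<bar>forces \<psi> \<xi>\<bar> \<le> C1 * (1 + cmod \<xi>) powr (-t))"
      using Lambda_powr_decay(2)[OF \<open>0 \<le> C\<close> _ C] by (intro exI[of _ "C * 125"] exI[of _ 3]) simp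
  qed
qed

end
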